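(* Let $X,Y\in\mathbb{R}^{n\times n}$ and define $L:\mathbb{R}^{n\times n}\to\mathbb{R}^{n\times n}$ by $L(A)=XAY$. Then $L$ maps the set of minimally semipositive $n\times n$ matrices onto itself (i.e. $L(S)=S$ where $S$ is this set) if and only if either both $X$ and $Y$ are monomial, or both $-X$ and $-Y$ are monomial.
   Context: For a matrix or vector, $\geq 0$ means entrywise nonnegative and $>0$ entrywise positive. A matrix $A\in\mathbb{R}^{m\times n}$ is semipositive if there exists $x\in\mathbb{R}^n$ with $x\geq 0$ and $Ax>0$. $A$ is minimally semipositive if it is semipositive and no submatrix obtained from $A$ by deleting one or more columns is semipositive. A square matrix $A$ is monomial if $A\geq 0$ and every row and every column of $A$ contains exactly one nonzero entry. *)

theory Defs
  imports "HOL-Analysis.Analysis"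
begin

text \<open>Matrices are elements of real^'n^'m (rows indexed by 'm, columns by 'n);
  entry (i,j) is A $ i $ j.\<close>

definition semipositive :: "real^'n^'m \<Rightarrow> bool" where
  "semipositive A \<longleftrightarrow> (\<exists>x. (\<forall>j. x $ j \<ge> 0) \<and> (\<forall>i. (A *v x) $ i > 0))"

text \<open>The submatrix of A keeping exactly the columns in J is semipositive.
  (A nonnegative x supported on J, applied to A, equals the submatrix applied to the
  restriction of x.)\<close>
definition semipositive_on_cols :: "real^'n^'m \<Rightarrow> 'n set \<Rightarrow> bool" where
  "semipositive_on_cols A J \<longleftrightarrow>
     (\<exists>x. (\<forall>j. x $ j \<ge> 0) \<and> (\<forall>j. j \<notin> J \<longrightarrow> x $ j = 0) \<and> (\<forall>i. (A *v x) $ i > 0))"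

definition minimally_semipositive :: "real^'n^'m \<Rightarrow> bool" where
  "minimally_semipositive A \<longleftrightarrow>
     semipositive A \<and> (\<forall>J. J \<subset> UNIV \<longrightarrow> \<not> semipositive_on_cols A J)"

definition monomial_matrix :: "real^'n^'n \<Rightarrow> bool" where
  "monomial_matrix A \<longleftrightarrow>
     (\<forall>i j. A $ i $ j \<ge> 0) \<and>
     (\<forall>i. \<exists>!j. A $ i $ j \<noteq> 0) \<and>
     (\<forall>j. \<exists>!i. A $ i $ j \<noteq> 0)"

end

theory Submission
  imports Defs
begin

text \<open>A square matrix is minimally semipositive iff it is monotone in the sense of Collatz
  (A v \<ge> 0 implies v \<ge> 0), i.e. invertible with a nonnegative inverse, and the monomial
  matrices are exactly the nonnegative monotone ones. So the question is which maps
  A \<mapsto> X A Y permute the monotone matrices; monomial X, Y (or -X, -Y) clearly do.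
  Conversely, the image of I forces X and Y to be invertible, with inverses Q and P.
  Feeding in the monotone inverses of the matrices I + c E_ij with c \<ge> 0 shows
  P_ki Q_jl \<ge> 0 for all indices, and the same argument for the inverse map gives
  Y_ki X_jl \<ge> 0. Hence X, Y, Q, P are all nonnegative or all nonpositive, and a nonnegative
  matrix with a nonnegative inverse is monomial.\<close>

definition monotone_matrix :: "real^'n^'m \<Rightarrow> bool" where
  "monotone_matrix M \<longleftrightarrow> (\<forall>v. 0 \<le> M *v v \<longrightarrow> 0 \<le> v)"

lemma nonneg_matrix_vector_mult:
  fixes M :: "real^'n^'m"
  assumes "0 \<le> M" "0 \<le> v"
  shows "0 \<le> M *v v"
  using assms by (auto simp: less_eq_vec_def matrix_vector_mult_def intro!: sum_nonneg)

lemma monotone_matrix_mult: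
  assumes "monotone_matrix M" "monotone_matrix N"
  shows "monotone_matrix (M ** N)"
  using assms unfolding monotone_matrix_def by (metis matrix_vector_mul_assoc)

lemma monotone_matrix_right_inverse_nonneg:
  fixes M :: "real^'n^'m"
  assumes "monotone_matrix M" "M ** R = mat 1"
  shows "0 \<le> R"
proof -
  have "0 \<le> R *v axis j 1" for j
  proof -
    have "M *v (R *v axis j 1) = axis j 1"
      by (simp add: matrix_vector_mul_assoc assms(2))
    then show ?thesis
      using assms(1) unfolding monotone_matrix_def by (simp add: less_eq_vec_def axis_def)
  qed
  then show ?thesis
    by (simp add: less_eq_vec_def matrix_vector_mult_basis column_def)
qed

lemma monotone_matrix_iff_nonneg_right_inverse:
  fixes M :: "real^'n^'n"
  shows "monotone_matrix M \<longleftrightarrow> (\<exists>N. M ** N = mat 1 \<and> 0 \<le> N)"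
proof
  assume mono: "monotone_matrix M"
  have "x = 0" if "M *v x = 0" for x
  proof -
    have "M *v (- x) = 0"
      using that by (metis matrix_vector_mult_diff_distrib diff_0 diff_self)
    then have "0 \<le> x" "0 \<le> - x"
      using mono that unfolding monotone_matrix_def by (metis order_refl)+
    then show ?thesis by simp
  qed
  then obtain N where "N ** M = mat 1"
    using matrix_left_invertible_ker by blast
  then have "M ** N = mat 1"
    using matrix_left_right_inverse by blast
  then show "\<exists>N. M ** N = mat 1 \<and> 0 \<le> N"
    using monotone_matrix_right_inverse_nonneg[OF mono] by blast
next
  assume "\<exists>N. M ** N = mat 1 \<and> 0 \<le> N"
  then obtain N where "N ** M = mat 1" "0 \<le> N"
    using matrix_left_right_inverse by blast
  then show "monotone_matrix M"
    unfolding monotone_matrix_def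
    by (metis matrix_vector_mul_assoc matrix_vector_mul_lid nonneg_matrix_vector_mult)
qed

lemma right_invertible_row_nonzero:
  fixes N :: "real^'n^'m"
  assumes "N ** A = mat 1"
  obtains l where "N$k$l \<noteq> 0"
proof -
  have "(N ** A)$k$k = 1"
    using assms by (simp add: mat_def)
  then have "(\<Sum>l\<in>UNIV. N$k$l * A$l$k) = 1"
    by (simp add: matrix_matrix_mult_def)
  then show thesis
    using that by (metis (no_types, lifting) mult_eq_0_iff sum.neutral zero_neq_one)
qed

lemma nonneg_matrix_vector_mult_pos:
  fixes N :: "real^'n^'m"
  assumes "0 \<le> N" "N$k$l \<noteq> 0" "\<forall>i. 0 < w$i"
  shows "0 < (N *v w)$k"
proof -
  have "0 < N$k$l * w$l"
    using assms by (simp add: less_eq_vec_def order_less_le)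
  moreover have "0 \<le> N$k$i * w$i" for i
    using assms by (simp add: less_eq_vec_def order_less_imp_le)
  ultimately show ?thesis
    unfolding matrix_vector_mult_def by (simp add: sum_pos2[of UNIV l])
qed

text \<open>Move from a semipositivity witness x along a direction v with A v \<ge> 0 until the
  first coordinate of x + t v vanishes.\<close>
lemma semipositive_drop_column:
  fixes A :: "real^'n^'m"
  assumes "semipositive A" "0 \<le> A *v v" "\<not> 0 \<le> v"
  obtains k where "semipositive_on_cols A (- {k})"
proof -
  obtain x where x0: "\<forall>j. 0 \<le> x$j" and Ax: "\<forall>i. 0 < (A *v x)$i"
    using assms(1) unfolding semipositive_def by blast
  define K where "K = {k. v$k < 0}"
  have "K \<noteq> {}"
    using assms(3) by (auto simp: K_def less_eq_vec_def not_le)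
  define ratio where "ratio k = x$k / - v$k" for k
  define k where "k = arg_min_on ratio K"
  have k: "k \<in> K" "\<And>k'. k' \<in> K \<Longrightarrow> ratio k \<le> ratio k'"
    using arg_min_if_finite[OF finite \<open>K \<noteq> {}\<close>, of ratio] unfolding k_def by (auto simp: not_less)
  define t where "t = ratio k"
  have t0: "0 \<le> t"
    using k(1) x0 by (simp add: t_def ratio_def K_def divide_nonneg_neg)
  define y where "y = x + t *\<^sub>R v"
  have "0 \<le> y$j" for j
  proof (cases "j \<in> K")
    case True
    then have "t \<le> x$j / - v$j"
      using k(2) by (simp add: t_def ratio_def)
    then show ?thesis
      using True by (simp add: y_def K_def field_simps)
  next
    case False
    then show ?thesis
      using x0 t0 by (simp add: y_def K_def)
  qed
  moreover have "y$k = 0"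
    using k(1) by (simp add: y_def t_def ratio_def K_def)
  moreover have "0 < (A *v y)$i" for i
  proof -
    have "A *v y = A *v x + t *\<^sub>R (A *v v)"
      by (simp add: y_def matrix_vector_right_distrib matrix_vector_mult_scaleR)
    then show ?thesis
      using Ax assms(2) t0 by (simp add: less_eq_vec_def add_pos_nonneg)
  qed
  ultimately have "semipositive_on_cols A (- {k})"
    unfolding semipositive_on_cols_def by (intro exI[of _ y]) auto
  then show thesis by (rule that)
qed

lemma minimally_semipositive_imp_monotone:
  fixes A :: "real^'n^'m"
  assumes "minimally_semipositive A"
  shows "monotone_matrix A"
  unfolding monotone_matrix_def
proof (intro allI impI)
  fix v assume "0 \<le> A *v v"
  show "0 \<le> v"
  proof (rule ccontr)
    assume "\<not> 0 \<le> v"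
    then obtain k where "semipositive_on_cols A (- {k})"
      using assms \<open>0 \<le> A *v v\<close> semipositive_drop_column
      unfolding minimally_semipositive_def by blast
    moreover have "- {k} \<subset> UNIV" by auto
    ultimately show False
      using assms unfolding minimally_semipositive_def by blast
  qed
qed

lemma monotone_imp_minimally_semipositive:
  fixes A :: "real^'n^'n"
  assumes "monotone_matrix A"
  shows "minimally_semipositive A"
proof -
  obtain N where "A ** N = mat 1" and N0: "0 \<le> N"
    using assms monotone_matrix_iff_nonneg_right_inverse by blast
  then have NA: "N ** A = mat 1"
    using matrix_left_right_inverse by blast
  have "0 \<le> N *v 1"
    using N0 by (rule nonneg_matrix_vector_mult) (simp add: less_eq_vec_def)
  moreover have "A *v (N *v 1) = 1"
    using \<open>A ** N = mat 1\<close> by (simp add: matrix_vector_mul_assoc)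
  ultimately have "semipositive A"
    unfolding semipositive_def by (intro exI[of _ "N *v 1"]) (simp add: less_eq_vec_def)
  moreover have "\<not> semipositive_on_cols A J" if J: "J \<subset> UNIV" for J
  proof
    assume "semipositive_on_cols A J"
    then obtain y where "\<forall>j. j \<notin> J \<longrightarrow> y$j = 0" and Ay: "\<forall>i. 0 < (A *v y)$i"
      unfolding semipositive_on_cols_def by blast
    moreover obtain k where "k \<notin> J"
      using J by auto
    moreover obtain l where "N$k$l \<noteq> 0"
      using right_invertible_row_nonzero[OF NA] by blast
    then have "0 < (N *v (A *v y))$k"
      using nonneg_matrix_vector_mult_pos[OF N0 _ Ay] by blast
    ultimately show False
      by (simp add: matrix_vector_mul_assoc NA)
  qed
  ultimately show ?thesis
    unfolding minimally_semipositive_def by blast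
qed

lemma minimally_semipositive_iff_monotone:
  fixes A :: "real^'n^'n"
  shows "minimally_semipositive A \<longleftrightarrow> monotone_matrix A"
  using minimally_semipositive_imp_monotone monotone_imp_minimally_semipositive by blast

lemma matrix_vector_mult_single_support:
  fixes A :: "real^'n^'m"
  assumes "\<forall>m. m \<noteq> j \<longrightarrow> A$i$m = 0"
  shows "(A *v v)$i = A$i$j * v$j"
proof -
  have "(\<Sum>m\<in>UNIV. A$i$m * v$m) = (\<Sum>m\<in>UNIV. if m = j then A$i$j * v$j else 0)"
    by (rule sum.cong) (auto simp: assms)
  then show ?thesis
    by (simp add: matrix_vector_mult_def)
qed

lemma matrix_mult_single_support:
  fixes A :: "real^'n^'m" and B :: "real^'p^'n"
  assumes "\<forall>m. m \<noteq> j \<longrightarrow> A$i$m = 0"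
  shows "(A ** B)$i$l = A$i$j * B$j$l"
  using matrix_vector_mult_single_support[OF assms, of "column l B"]
  by (simp add: matrix_matrix_mult_def matrix_vector_mult_def column_def)

lemma nonneg_inverse_row_support:
  fixes X Q :: "real^'n^'n"
  assumes "0 \<le> X" "0 \<le> Q" "X ** Q = mat 1" "X$i$j \<noteq> 0" "m \<noteq> i"
  shows "Q$j$m = 0"
proof -
  have "(X ** Q)$i$m = 0"
    using assms(3,5) by (simp add: mat_def)
  then have "(\<Sum>j\<in>UNIV. X$i$j * Q$j$m) = 0"
    by (simp add: matrix_matrix_mult_def)
  moreover have "\<forall>j. 0 \<le> X$i$j * Q$j$m"
    using assms(1,2) by (simp add: less_eq_vec_def)
  ultimately have "X$i$j * Q$j$m = 0"
    by (simp add: sum_nonneg_eq_0_iff)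
  then show ?thesis
    using assms(4) by simp
qed

lemma nonneg_inverse_unique_nonzero_in_row:
  fixes X Q :: "real^'n^'n"
  assumes "0 \<le> X" "0 \<le> Q" "X ** Q = mat 1"
  shows "\<exists>!j. X$i$j \<noteq> 0"
proof -
  obtain j where j: "X$i$j \<noteq> 0"
    using right_invertible_row_nonzero[OF assms(3)] by blast
  have QX: "Q ** X = mat 1"
    using assms(3) matrix_left_right_inverse by blast
  have "\<forall>m. m \<noteq> i \<longrightarrow> Q$j$m = 0"
    using nonneg_inverse_row_support[OF assms j] by blast
  then have row_j: "(Q ** X)$j$l = Q$j$i * X$i$l" for l
    by (rule matrix_mult_single_support)
  have "j' = j" if "X$i$j' \<noteq> 0" for j'
  proof -
    have "Q$j$i \<noteq> 0"
      using row_j[of j] QX by (auto simp: mat_def)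
    then have "(Q ** X)$j$j' \<noteq> 0"
      using row_j[of j'] that by simp
    then show ?thesis
      using QX by (auto simp: mat_def split: if_splits)
  qed
  then show ?thesis
    using j by blast
qed

lemma monomial_imp_monotone:
  fixes X :: "real^'n^'n"
  assumes "monomial_matrix X"
  shows "monotone_matrix X"
  unfolding monotone_matrix_def less_eq_vec_def
proof (intro allI impI)
  fix v j assume Xv: "\<forall>i. 0$i \<le> (X *v v)$i"
  obtain i where i: "X$i$j \<noteq> 0"
    using assms unfolding monomial_matrix_def by blast
  moreover have "\<exists>!j. X$i$j \<noteq> 0"
    using assms unfolding monomial_matrix_def by blast
  ultimately have "\<forall>m. m \<noteq> j \<longrightarrow> X$i$m = 0"
    by blast
  then have "(X *v v)$i = X$i$j * v$j"
    by (rule matrix_vector_mult_single_support)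
  then have "0 \<le> X$i$j * v$j"
    using Xv[rule_format, of i] by simp
  moreover have "0 < X$i$j"
    using assms i unfolding monomial_matrix_def by (simp add: order_less_le)
  ultimately show "0$j \<le> v$j"
    by (simp add: zero_le_mult_iff)
qed

lemma monomial_matrix_iff_nonneg_monotone:
  fixes M :: "real^'n^'n"
  shows "monomial_matrix M \<longleftrightarrow> 0 \<le> M \<and> monotone_matrix M"
proof
  assume "monomial_matrix M"
  then show "0 \<le> M \<and> monotone_matrix M"
    using monomial_imp_monotone unfolding monomial_matrix_def by (simp add: less_eq_vec_def)
next
  assume "0 \<le> M \<and> monotone_matrix M"
  then obtain Q where M0: "0 \<le> M" and MQ: "M ** Q = mat 1" and Q0: "0 \<le> Q"
    unfolding monotone_matrix_iff_nonneg_right_inverse by blast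
  have "transpose M ** transpose Q = mat 1"
    using MQ matrix_left_right_inverse by (metis matrix_transpose_mul transpose_mat)
  moreover have "0 \<le> transpose M" "0 \<le> transpose Q"
    using M0 Q0 by (simp_all add: less_eq_vec_def transpose_def)
  ultimately have cols: "\<exists>!i. M$i$j \<noteq> 0" for j
    using nonneg_inverse_unique_nonzero_in_row[of "transpose M" "transpose Q" j]
    by (simp add: transpose_def)
  have rows: "\<exists>!j. M$i$j \<noteq> 0" for i
    using nonneg_inverse_unique_nonzero_in_row[OF M0 Q0 MQ] .
  have "0 \<le> M$i$j" for i j
    using M0 by (simp add: less_eq_vec_def)
  then show "monomial_matrix M"
    unfolding monomial_matrix_def using rows cols by blast
qed

lemma monomial_matrix_monotone_inverse:
  fixes X :: "real^'n^'n"
  assumes "monomial_matrix X"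
  obtains Q where "X ** Q = mat 1" "Q ** X = mat 1" "monotone_matrix Q"
proof -
  have "0 \<le> X" "monotone_matrix X"
    using assms unfolding monomial_matrix_iff_nonneg_monotone by auto
  then obtain Q where XQ: "X ** Q = mat 1"
    unfolding monotone_matrix_iff_nonneg_right_inverse by blast
  then have QX: "Q ** X = mat 1"
    using matrix_left_right_inverse by blast
  then have "monotone_matrix Q"
    unfolding monotone_matrix_iff_nonneg_right_inverse using \<open>0 \<le> X\<close> by blast
  then show thesis
    using that XQ QX by blast
qed

lemma monotone_image_eq_if_monomial:
  fixes X Y :: "real^'n^'n"
  assumes "monomial_matrix X" "monomial_matrix Y"
  shows "(\<lambda>A. X ** A ** Y) ` {A. monotone_matrix A} = {A. monotone_matrix A}"
proof (intro equalityI subsetI)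
  fix B assume "B \<in> (\<lambda>A. X ** A ** Y) ` {A. monotone_matrix A}"
  then obtain A where "monotone_matrix A" "B = X ** A ** Y"
    by blast
  then show "B \<in> {A. monotone_matrix A}"
    using assms by (simp add: monotone_matrix_mult monomial_imp_monotone)
next
  fix B :: "real^'n^'n" assume "B \<in> {A. monotone_matrix A}"
  obtain Q where XQ: "X ** Q = mat 1" and "monotone_matrix Q"
    using monomial_matrix_monotone_inverse[OF assms(1)] by blast
  obtain P where PY: "P ** Y = mat 1" and "monotone_matrix P"
    using monomial_matrix_monotone_inverse[OF assms(2)] by blast
  have "monotone_matrix (Q ** B ** P)"
    using \<open>B \<in> _\<close> \<open>monotone_matrix Q\<close> \<open>monotone_matrix P\<close> monotone_matrix_mult by auto
  moreover have "B = X ** (Q ** B ** P) ** Y"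
    by (simp add: matrix_mul_assoc XQ) (simp add: matrix_mul_assoc[symmetric] PY)
  ultimately show "B \<in> (\<lambda>A. X ** A ** Y) ` {A. monotone_matrix A}"
    by blast
qed

lemma matrix_add_rdistrib: "((A::real^'n^'m) + B) ** C = A ** C + B ** C"
  by (simp add: vec_eq_iff matrix_matrix_mult_def sum.distrib ring_distribs)

lemma matrix_mult_uminus_left [simp]: "(- (A::real^'n^'m)) ** B = - (A ** B)"
  by (simp add: vec_eq_iff matrix_matrix_mult_def sum_negf)

lemma matrix_mult_uminus_right [simp]: "(A::real^'n^'m) ** (- B) = - (A ** B)"
  by (simp add: vec_eq_iff matrix_matrix_mult_def sum_negf)

definition matrix_unit :: "'m \<Rightarrow> 'n \<Rightarrow> real^'n^'m" where
  "matrix_unit i j = (\<chi> a b. if a = i \<and> b = j then 1 else 0)"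

lemma matrix_mult_matrix_unit_entry: "(P ** matrix_unit i j ** Q)$k$l = P$k$i * Q$j$l"
proof -
  have "P ** matrix_unit i j = (\<chi> a b. if b = j then P$a$i else 0)"
    by (simp add: vec_eq_iff matrix_matrix_mult_def matrix_unit_def if_distrib[where f="\<lambda>x. _ * x"]
        cong: if_cong)
  then show ?thesis
    by (simp add: matrix_matrix_mult_def if_distrib[where f="\<lambda>x. x * _"] cong: if_cong)
qed

lemma matrix_unit_mult_self:
  "matrix_unit i j ** matrix_unit i j = (if i = j then matrix_unit i j else 0)"
  by (auto simp: vec_eq_iff matrix_matrix_mult_def matrix_unit_def if_distrib[where f="\<lambda>x. x * _"]
      cong: if_cong)

text \<open>As E_ij E_ij = [i = j] E_ij, the inverse of I + c E_ij is again of the form I + e E_ij.\<close>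
lemma elementary_matrix_right_invertible:
  fixes c :: real and i j :: "'n::finite"
  assumes "0 \<le> c"
  shows "\<exists>N. (mat 1 + c *\<^sub>R matrix_unit i j) ** N = mat 1"
proof -
  define e where "e = - c / (1 + (if i = j then c else 0))"
  have "0 < 1 + c"
    using assms by simp
  then have "e + c + (if i = j then c * e else 0) = 0"
    by (cases "i = j") (simp_all add: e_def field_simps)
  then have "(e + c) *\<^sub>R matrix_unit i j + (c * e) *\<^sub>R (matrix_unit i j ** matrix_unit i j) = 0"
    by (auto simp: matrix_unit_mult_self scaleR_left_distrib[symmetric])
  then have "(mat 1 + c *\<^sub>R matrix_unit i j) ** (mat 1 + e *\<^sub>R matrix_unit i j) = mat 1"
    by (simp add: matrix_add_ldistrib matrix_add_rdistrib matrix_scalar_ac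
        scalar_matrix_assoc[symmetric] algebra_simps)
  then show ?thesis by blast
qed

lemma nonneg_slope_if_nonneg_on_ray:
  fixes a b :: real
  assumes "\<And>c. 0 \<le> c \<Longrightarrow> 0 \<le> a + c * b"
  shows "0 \<le> b"
proof (rule ccontr)
  assume "\<not> 0 \<le> b"
  then have "0 \<le> (\<bar>a\<bar> + 1) / - b" and "(\<bar>a\<bar> + 1) / - b * b = - (\<bar>a\<bar> + 1)"
    by (simp_all add: divide_nonneg_pos field_simps)
  then show False
    using assms[of "(\<bar>a\<bar> + 1) / - b"] by linarith
qed

text \<open>The inverse of I + c E_ij is monotone, so its image under A \<mapsto> X A Y is monotone too,
  and the right inverse of that image is P (I + c E_ij) Q.\<close>
lemma monotone_preserving_perturbed_inverse_nonneg:
  fixes X Y P Q :: "real^'n^'n"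
  assumes pres: "\<forall>A. monotone_matrix A \<longrightarrow> monotone_matrix (X ** A ** Y)"
    and XQ: "X ** Q = mat 1" and YP: "Y ** P = mat 1" and "0 \<le> c"
  shows "0 \<le> P ** (mat 1 + c *\<^sub>R matrix_unit i j) ** Q"
proof -
  define N where "N = mat 1 + c *\<^sub>R matrix_unit i j"
  obtain N' where "N ** N' = mat 1"
    unfolding N_def using elementary_matrix_right_invertible[OF \<open>0 \<le> c\<close>] by blast
  then have N'N: "N' ** N = mat 1"
    using matrix_left_right_inverse by blast
  have "0 \<le> N"
    using \<open>0 \<le> c\<close> by (simp add: N_def less_eq_vec_def mat_def matrix_unit_def)
  then have "monotone_matrix N'"
    unfolding monotone_matrix_iff_nonneg_right_inverse using N'N by blast
  then have "monotone_matrix (X ** N' ** Y)"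
    using pres by blast
  moreover have "(X ** N' ** Y) ** (P ** N ** Q) = X ** (N' ** (Y ** P) ** N) ** Q"
    by (simp add: matrix_mul_assoc)
  then have "(X ** N' ** Y) ** (P ** N ** Q) = mat 1"
    using XQ YP N'N by simp
  ultimately show ?thesis
    unfolding N_def by (rule monotone_matrix_right_inverse_nonneg)
qed

lemma monotone_preserving_imp_sign_products:
  fixes X Y P Q :: "real^'n^'n"
  assumes pres: "\<forall>A. monotone_matrix A \<longrightarrow> monotone_matrix (X ** A ** Y)"
    and XQ: "X ** Q = mat 1" and YP: "Y ** P = mat 1"
  shows "0 \<le> P$k$i * Q$j$l"
proof (rule nonneg_slope_if_nonneg_on_ray)
  fix c :: real assume "0 \<le> c"
  have "P ** (mat 1 + c *\<^sub>R matrix_unit i j) ** Q = P ** Q + c *\<^sub>R (P ** matrix_unit i j ** Q)"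
    by (simp add: matrix_add_ldistrib matrix_add_rdistrib matrix_scalar_ac
        scalar_matrix_assoc[symmetric])
  moreover have "0 \<le> P ** (mat 1 + c *\<^sub>R matrix_unit i j) ** Q"
    using monotone_preserving_perturbed_inverse_nonneg[OF pres XQ YP \<open>0 \<le> c\<close>] .
  ultimately show "0 \<le> (P ** Q)$k$l + c * (P$k$i * Q$j$l)"
    by (metis less_eq_vec_def matrix_mult_matrix_unit_entry vector_add_component
        vector_scaleR_component zero_index real_scaleR_def)
qed

lemma right_invertible_nonzero:
  fixes X :: "real^'n^'m"
  assumes "X ** Q = mat 1"
  shows "X \<noteq> 0"
  using right_invertible_row_nonzero[OF assms] by (metis zero_index)

lemma products_nonneg_imp_same_sign:
  fixes X Y :: "real^'n^'n"
  assumes prod: "\<forall>k i j l. 0 \<le> Y$k$i * X$j$l" and "X \<noteq> 0" "Y \<noteq> 0"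
  shows "(0 \<le> X \<and> 0 \<le> Y) \<or> (X \<le> 0 \<and> Y \<le> 0)"
proof -
  obtain j l where "X$j$l \<noteq> 0"
    using \<open>X \<noteq> 0\<close> by (auto simp: vec_eq_iff)
  obtain k i where "Y$k$i \<noteq> 0"
    using \<open>Y \<noteq> 0\<close> by (auto simp: vec_eq_iff)
  show ?thesis
  proof (cases "0 < X$j$l")
    case True
    then have Y0: "0 \<le> Y$a$b" for a b
      using prod[rule_format, of a b j l] by (simp add: zero_le_mult_iff)
    then have "0 < Y$k$i"
      using \<open>Y$k$i \<noteq> 0\<close> by (simp add: order_less_le)
    then have "0 \<le> X$a$b" for a b
      using prod[rule_format, of k i a b] by (simp add: zero_le_mult_iff)
    then show ?thesis
      using Y0 by (simp add: less_eq_vec_def)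
  next
    case False
    then have "X$j$l < 0"
      using \<open>X$j$l \<noteq> 0\<close> by simp
    then have Y0: "Y$a$b \<le> 0" for a b
      using prod[rule_format, of a b j l] by (simp add: zero_le_mult_iff)
    then have "Y$k$i < 0"
      using \<open>Y$k$i \<noteq> 0\<close> by (simp add: order_less_le)
    then have "X$a$b \<le> 0" for a b
      using prod[rule_format, of k i a b] by (simp add: zero_le_mult_iff)
    then show ?thesis
      using Y0 by (simp add: less_eq_vec_def)
  qed
qed

lemma right_inverse_nonneg_if_sign_definite:
  fixes X Q :: "real^'n^'n"
  assumes "X ** Q = mat 1" "0 \<le> X" "0 \<le> Q \<or> Q \<le> 0"
  shows "0 \<le> Q"
proof (rule ccontr)
  assume "\<not> 0 \<le> Q"
  then have "Q \<le> 0"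
    using assms(3) by blast
  then have "(X ** Q)$a$a \<le> 0" for a
    using assms(2) unfolding matrix_matrix_mult_def
    by (auto simp: less_eq_vec_def intro!: sum_nonpos mult_nonneg_nonpos)
  then show False
    using assms(1) by (simp add: mat_def)
qed

lemma monotone_image_eq_imp_inverses:
  fixes X Y :: "real^'n^'n"
  assumes eq: "(\<lambda>A. X ** A ** Y) ` {A. monotone_matrix A} = {A. monotone_matrix A}"
  obtains Q P where "X ** Q = mat 1" "Q ** X = mat 1" "Y ** P = mat 1" "P ** Y = mat 1"
    "\<forall>B. monotone_matrix B \<longrightarrow> monotone_matrix (Q ** B ** P)"
proof -
  have "monotone_matrix (mat 1 :: real^'n^'n)"
    by (simp add: monotone_matrix_def)
  then have "monotone_matrix (X ** mat 1 ** Y)"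
    using eq by blast
  then obtain R where R: "(X ** Y) ** R = mat 1"
    unfolding monotone_matrix_iff_nonneg_right_inverse by auto
  define Q where "Q = Y ** R"
  define P where "P = R ** X"
  have XQ: "X ** Q = mat 1"
    using R by (simp add: Q_def matrix_mul_assoc)
  then have QX: "Q ** X = mat 1"
    using matrix_left_right_inverse by blast
  have "R ** (X ** Y) = mat 1"
    using R matrix_left_right_inverse by blast
  then have PY: "P ** Y = mat 1"
    by (simp add: P_def matrix_mul_assoc)
  then have YP: "Y ** P = mat 1"
    using matrix_left_right_inverse by blast
  have "monotone_matrix (Q ** B ** P)" if "monotone_matrix B" for B
  proof -
    obtain A where "monotone_matrix A" "B = X ** A ** Y"
      using eq \<open>monotone_matrix B\<close> by blast
    moreover have "Q ** (X ** A ** Y) ** P = A"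
      by (simp add: matrix_mul_assoc QX) (simp add: matrix_mul_assoc[symmetric] YP)
    ultimately show ?thesis
      by simp
  qed
  then show thesis
    using that XQ QX YP PY by blast
qed

lemma monotone_image_eq_imp_common_sign:
  fixes X Y :: "real^'n^'n"
  assumes eq: "(\<lambda>A. X ** A ** Y) ` {A. monotone_matrix A} = {A. monotone_matrix A}"
  obtains Q P where "X ** Q = mat 1" "Y ** P = mat 1"
    "(0 \<le> X \<and> 0 \<le> Y \<and> 0 \<le> Q \<and> 0 \<le> P) \<or> (X \<le> 0 \<and> Y \<le> 0 \<and> Q \<le> 0 \<and> P \<le> 0)"
proof -
  obtain Q P where XQ: "X ** Q = mat 1" and QX: "Q ** X = mat 1"
    and YP: "Y ** P = mat 1" and PY: "P ** Y = mat 1"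
    and bwd: "\<forall>B. monotone_matrix B \<longrightarrow> monotone_matrix (Q ** B ** P)"
    using monotone_image_eq_imp_inverses[OF eq] by blast
  have fwd: "\<forall>A. monotone_matrix A \<longrightarrow> monotone_matrix (X ** A ** Y)"
    using eq by blast
  have sign_XY: "(0 \<le> X \<and> 0 \<le> Y) \<or> (X \<le> 0 \<and> Y \<le> 0)"
    using products_nonneg_imp_same_sign monotone_preserving_imp_sign_products[OF bwd QX PY]
      right_invertible_nonzero[OF XQ] right_invertible_nonzero[OF YP] by blast
  have "(0 \<le> Q \<and> 0 \<le> P) \<or> (Q \<le> 0 \<and> P \<le> 0)"
    using products_nonneg_imp_same_sign monotone_preserving_imp_sign_products[OF fwd XQ YP]
      right_invertible_nonzero[OF QX] right_invertible_nonzero[OF PY] by blast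
  then have Q: "0 \<le> Q \<or> Q \<le> 0" and P: "0 \<le> P \<or> P \<le> 0"
    by blast+
  from sign_XY show thesis
  proof (elim disjE conjE)
    assume "0 \<le> X" "0 \<le> Y"
    then show thesis
      using that XQ YP right_inverse_nonneg_if_sign_definite Q P by blast
  next
    assume "X \<le> 0" "Y \<le> 0"
    have "0 \<le> - Q"
      using right_inverse_nonneg_if_sign_definite[of "- X" "- Q"] XQ \<open>X \<le> 0\<close> Q by auto
    moreover have "0 \<le> - P"
      using right_inverse_nonneg_if_sign_definite[of "- Y" "- P"] YP \<open>Y \<le> 0\<close> P by auto
    ultimately show thesis
      using that XQ YP \<open>X \<le> 0\<close> \<open>Y \<le> 0\<close> by simp
  qed
qed

theorem mainTheorem7:
  fixes X Y :: "real^'n^'n"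
  shows "((\<lambda>A. X ** A ** Y) ` {A :: real^'n^'n. minimally_semipositive A}
            = {A. minimally_semipositive A})
         \<longleftrightarrow> ((monomial_matrix X \<and> monomial_matrix Y) \<or>
              (monomial_matrix (- X) \<and> monomial_matrix (- Y)))"
proof -
  have msp: "{A. minimally_semipositive A} = {A :: real^'n^'n. monotone_matrix A}"
    using minimally_semipositive_iff_monotone by blast
  have neg: "(\<lambda>A. (- X) ** A ** (- Y)) = (\<lambda>A. X ** A ** Y)"
    by simp
  show ?thesis
    unfolding msp
  proof
    assume "(\<lambda>A. X ** A ** Y) ` {A. monotone_matrix A} = {A. monotone_matrix A}"
    then obtain Q P where "X ** Q = mat 1" "Y ** P = mat 1"
      "(0 \<le> X \<and> 0 \<le> Y \<and> 0 \<le> Q \<and> 0 \<le> P) \<or> (X \<le> 0 \<and> Y \<le> 0 \<and> Q \<le> 0 \<and> P \<le> 0)"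
      by (rule monotone_image_eq_imp_common_sign)
    moreover have "(- X) ** (- Q) = X ** Q" "(- Y) ** (- P) = Y ** P"
      by simp_all
    ultimately show "(monomial_matrix X \<and> monomial_matrix Y) \<or>
        (monomial_matrix (- X) \<and> monomial_matrix (- Y))"
      unfolding monomial_matrix_iff_nonneg_monotone monotone_matrix_iff_nonneg_right_inverse
      by (metis neg_0_le_iff_le)
  next
    assume "(monomial_matrix X \<and> monomial_matrix Y) \<or>
        (monomial_matrix (- X) \<and> monomial_matrix (- Y))"
    then show "(\<lambda>A. X ** A ** Y) ` {A. monotone_matrix A} = {A. monotone_matrix A}"
      using monotone_image_eq_if_monomial neg by metis
  qed
qed

end
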